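(* Let $n\ge 1$, let $x_1,\dots,x_n$ be distinct integers each greater than $1$, and let $D=\{1,0,x_1,\dots,x_n\}$. If $(T,s)$ is an optimal signed tree realizing $D$ and $uv$ is the unique edge of $T$ with $s(uv)=-$, then $\deg(u)=\deg(v)=2$.
   Context: A signed tree is a pair $(T,s)$ where $T$ is a finite tree and $s:E(T)\to\{+,-\}$. The signed degree $sdeg(v)$ of a vertex is the number of incident positive edges minus the number of incident negative edges. $(T,s)$ realizes $D$ if $D=\{sdeg(v):v\in V(T)\}$. $\sigma(D)=\min\{|V(T)|: \text{some signed tree }(T,s)\text{ realizes }D\}$, and a signed tree $(T,s)$ realizing $D$ is optimal if $|V(T)|=\sigma(D)$. $\deg$ denotes the ordinary degree in $T$. *)

theory Defs
  imports Main
begin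

text \<open>A finite (simple, undirected) graph is given by a vertex set V and an edge set E
  of two-element subsets of V.  A sign function assigns True (= +) or False (= -) to edges.\<close>

definition is_walk :: "'a set set \<Rightarrow> 'a list \<Rightarrow> bool" where
  "is_walk E xs \<longleftrightarrow> xs \<noteq> [] \<and> (\<forall>i. Suc i < length xs \<longrightarrow> {xs ! i, xs ! Suc i} \<in> E)"

definition graph_connected :: "'a set \<Rightarrow> 'a set set \<Rightarrow> bool" where
  "graph_connected V E \<longleftrightarrow>
     (\<forall>u\<in>V. \<forall>v\<in>V. \<exists>xs. is_walk E xs \<and> set xs \<subseteq> V \<and> hd xs = u \<and> last xs = v)"

definition is_cycle :: "'a set set \<Rightarrow> 'a list \<Rightarrow> bool" where
  "is_cycle E xs \<longleftrightarrow> length xs \<ge> 3 \<and> distinct xs \<and> is_walk E xs \<and> {last xs, hd xs} \<in> E"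

definition is_tree :: "'a set \<Rightarrow> 'a set set \<Rightarrow> bool" where
  "is_tree V E \<longleftrightarrow> finite V \<and> V \<noteq> {} \<and>
     E \<subseteq> {{a, b} | a b. a \<in> V \<and> b \<in> V \<and> a \<noteq> b} \<and>
     graph_connected V E \<and> \<not> (\<exists>xs. is_cycle E xs)"

definition deg :: "'a set set \<Rightarrow> 'a \<Rightarrow> nat" where
  "deg E v = card {e \<in> E. v \<in> e}"

definition sdeg :: "'a set set \<Rightarrow> ('a set \<Rightarrow> bool) \<Rightarrow> 'a \<Rightarrow> int" where
  "sdeg E s v = int (card {e \<in> E. v \<in> e \<and> s e}) - int (card {e \<in> E. v \<in> e \<and> \<not> s e})"

definition realizes :: "'a set \<Rightarrow> 'a set set \<Rightarrow> ('a set \<Rightarrow> bool) \<Rightarrow> int set \<Rightarrow> bool" where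
  "realizes V E s D \<longleftrightarrow> D = sdeg E s ` V"

text \<open>sigma(D): least order of a signed tree realizing D (trees taken up to isomorphism,
  represented with natural-number vertices).\<close>
definition sigma :: "int set \<Rightarrow> nat" where
  "sigma D = (LEAST k. \<exists>(V::nat set) E s. is_tree V E \<and> realizes V E s D \<and> card V = k)"

definition optimal :: "'a set \<Rightarrow> 'a set set \<Rightarrow> ('a set \<Rightarrow> bool) \<Rightarrow> int set \<Rightarrow> bool" where
  "optimal V E s D \<longleftrightarrow> is_tree V E \<and> realizes V E s D \<and> card V = sigma D"

end

theory Submission
  imports Defs
begin

text \<open>In a tree, \<open>\<Sum>\<^sub>v (deg v - 1) = |V| - 2\<close> and every degree is at least 1. Since
  only the ends \<open>u, v\<close> of the negative edge have signed degree \<open>deg - 2\<close>, the value 0 forces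
  one end, say \<open>p\<close>, to have degree 2. If the other end \<open>q\<close> had \<open>deg q \<noteq> 2\<close>, then
  \<open>c = deg q - 2\<close> is a positive element of \<open>D\<close>, and each \<open>x\<^sub>i \<noteq> c\<close> is the degree of a
  vertex outside \<open>{p, q}\<close>; the degree sum then gives
  \<open>|V| \<ge> 5 + \<Sum>\<^sub>i (x\<^sub>i - 1)\<close>. But a path \<open>0 - 1 - 2 - 3\<close> with negative middle edge, in
  which leaf stars are grown to give the degrees \<open>x\<^sub>i\<close>, realizes \<open>D\<close> with
  \<open>4 + \<Sum>\<^sub>i (x\<^sub>i - 1)\<close> vertices, contradicting optimality.\<close>

section \<open>Edges, walks and cycles\<close>

definition edges_on :: "'a set \<Rightarrow> 'a set set" where
  "edges_on V = {{a, b} | a b. a \<in> V \<and> b \<in> V \<and> a \<noteq> b}"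

lemma is_tree_iff:
  "is_tree V E \<longleftrightarrow> finite V \<and> V \<noteq> {} \<and> E \<subseteq> edges_on V \<and>
     graph_connected V E \<and> \<not> (\<exists>xs. is_cycle E xs)"
  unfolding is_tree_def edges_on_def by simp

lemma edges_on_subset_Pow: "edges_on V \<subseteq> Pow V"
  unfolding edges_on_def by auto

lemma finite_edges: "finite V \<Longrightarrow> E \<subseteq> edges_on V \<Longrightarrow> finite E"
  using edges_on_subset_Pow by (metis finite_Pow_iff finite_subset subset_trans)

lemma edges_onE:
  assumes "e \<in> edges_on V"
  obtains a b where "e = {a, b}" "a \<in> V" "b \<in> V" "a \<noteq> b"
  using assms unfolding edges_on_def by blast

lemma edges_on_other_end:
  assumes "e \<in> edges_on V" "y \<in> e"
  obtains z where "z \<in> V" "z \<noteq> y" "e = {y, z}"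
  using assms by (elim edges_onE) auto

lemma doubleton_in_edges_on_iff: "{a, b} \<in> edges_on V \<longleftrightarrow> a \<in> V \<and> b \<in> V \<and> a \<noteq> b"
  unfolding edges_on_def by (auto simp: doubleton_eq_iff)

lemma card_edge: "e \<in> edges_on V \<Longrightarrow> card e = 2"
  by (elim edges_onE) auto

lemma is_walk_Cons: "is_walk E xs \<Longrightarrow> {y, hd xs} \<in> E \<Longrightarrow> is_walk E (y # xs)"
  unfolding is_walk_def by (auto simp: nth_Cons hd_conv_nth split: nat.split)

lemma is_walk_snoc: "is_walk E xs \<Longrightarrow> {last xs, y} \<in> E \<Longrightarrow> is_walk E (xs @ [y])"
  unfolding is_walk_def
proof (intro conjI allI impI)
  fix i assume walk: "xs \<noteq> [] \<and> (\<forall>i. Suc i < length xs \<longrightarrow> {xs ! i, xs ! Suc i} \<in> E)"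
    and last: "{last xs, y} \<in> E" and i: "Suc i < length (xs @ [y])"
  show "{(xs @ [y]) ! i, (xs @ [y]) ! Suc i} \<in> E"
  proof (cases "Suc i < length xs")
    case True
    then show ?thesis using walk by (simp add: nth_append)
  next
    case False
    then have "Suc i = length xs" "i = length xs - 1" using i by simp_all
    then show ?thesis using walk last by (simp add: nth_append last_conv_nth)
  qed
qed simp

lemma is_walk_mono: "is_walk E xs \<Longrightarrow> E \<subseteq> F \<Longrightarrow> is_walk F xs"
  unfolding is_walk_def by blast

lemma is_walk_drop: "is_walk E xs \<Longrightarrow> j < length xs \<Longrightarrow> is_walk E (drop j xs)"
  unfolding is_walk_def by auto

lemma is_cycle_mono: "is_cycle E xs \<Longrightarrow> E \<subseteq> F \<Longrightarrow> is_cycle F xs"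
  unfolding is_cycle_def using is_walk_mono by blast

lemma is_cycle_edge:
  assumes "is_cycle E xs" "i < length xs"
  shows "{xs ! i, xs ! ((i + 1) mod length xs)} \<in> E"
proof (cases "Suc i < length xs")
  case True
  then show ?thesis using assms unfolding is_cycle_def is_walk_def by auto
next
  case False
  then have "i = length xs - 1" "i + 1 = length xs" using assms(2) by auto
  moreover have "{last xs, hd xs} \<in> E" "xs \<noteq> []" using assms unfolding is_cycle_def by auto
  ultimately show ?thesis by (simp add: hd_conv_nth last_conv_nth)
qed

lemma is_cycle_two_neighbours:
  assumes "is_cycle E xs" "w \<in> set xs"
  obtains y z where "y \<in> set xs" "z \<in> set xs" "y \<noteq> z" "y \<noteq> w" "z \<noteq> w"
    "{w, y} \<in> E" "{w, z} \<in> E"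
proof -
  define L where "L = length xs"
  have L: "3 \<le> L" and dist: "distinct xs" using assms(1) unfolding is_cycle_def L_def by auto
  obtain k where k: "k < L" "xs ! k = w" using assms(2) unfolding L_def by (auto simp: in_set_conv_nth)
  define next_k where "next_k = (if k + 1 = L then 0 else k + 1)"
  define prev_k where "prev_k = (if k = 0 then L - 1 else k - 1)"
  have next_k: "next_k < L" "next_k \<noteq> k" "(k + 1) mod L = next_k"
    unfolding next_k_def using k L by auto
  have prev_k: "prev_k < L" "prev_k \<noteq> k" "(prev_k + 1) mod L = k"
    unfolding prev_k_def using k L by auto
  have "prev_k \<noteq> next_k" unfolding prev_k_def next_k_def using k L by auto
  then have "xs ! prev_k \<noteq> xs ! next_k" "xs ! prev_k \<noteq> w" "xs ! next_k \<noteq> w"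
    using dist k(1) next_k prev_k unfolding k(2)[symmetric] L_def by (simp_all add: nth_eq_iff_index_eq)
  moreover have "{w, xs ! next_k} \<in> E" "{w, xs ! prev_k} \<in> E"
    using is_cycle_edge[OF assms(1), of k] is_cycle_edge[OF assms(1), of prev_k] k next_k prev_k
    unfolding L_def by (auto simp: insert_commute)
  ultimately show ?thesis
    using that[of "xs ! prev_k" "xs ! next_k"] next_k(1) prev_k(1) unfolding L_def by auto
qed

section \<open>Degrees in trees\<close>

lemma sum_deg_eq_twice_card_edges:
  assumes "finite V" "E \<subseteq> edges_on V"
  shows "(\<Sum>v\<in>V. deg E v) = 2 * card E"
proof -
  have fE: "finite E" using assms finite_edges by blast
  have "(\<Sum>v\<in>V. deg E v) = (\<Sum>v\<in>V. \<Sum>e\<in>E. if v \<in> e then 1 else 0)"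
    unfolding deg_def using fE by (simp add: sum.inter_filter[symmetric])
  also have "\<dots> = (\<Sum>e\<in>E. \<Sum>v\<in>V. if v \<in> e then 1 else 0)" by (rule sum.swap)
  also have "\<dots> = (\<Sum>e\<in>E. card e)"
  proof (rule sum.cong)
    fix e assume "e \<in> E"
    then have "{v \<in> V. v \<in> e} = e" using assms edges_on_subset_Pow by blast
    then show "(\<Sum>v\<in>V. if v \<in> e then 1 else 0) = card e"
      using assms(1) by (simp add: sum.inter_filter[symmetric])
  qed simp
  also have "\<dots> = (\<Sum>e\<in>E. 2)" using assms card_edge by (intro sum.cong) auto
  finally show ?thesis by simp
qed

lemma connected_deg_ge_1:
  assumes "graph_connected V E" "finite E" "w \<in> V" "p \<in> V" "p \<noteq> w"
  shows "1 \<le> deg E w"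
proof -
  obtain xs where xs: "is_walk E xs" "hd xs = w" "last xs = p"
    using assms unfolding graph_connected_def by blast
  then have "Suc 0 < length xs"
    using assms(5) unfolding is_walk_def by (cases xs) auto
  then have "{w, xs ! 1} \<in> {e \<in> E. w \<in> e}"
    using xs unfolding is_walk_def by (auto simp: hd_conv_nth)
  then show ?thesis
    unfolding deg_def using assms(2) by (auto simp: Suc_le_eq card_gt_0_iff)
qed

lemma longest_path_end_neighbour:
  assumes path: "distinct xs" "is_walk E xs" "set xs \<subseteq> V"
    and longest: "\<And>ys. distinct ys \<Longrightarrow> is_walk E ys \<Longrightarrow> set ys \<subseteq> V \<Longrightarrow> length ys \<le> length xs"
    and acyclic: "\<not> (\<exists>ys. is_cycle E ys)"
    and E: "E \<subseteq> edges_on V" and z: "{last xs, z} \<in> E"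
  shows "z = xs ! (length xs - 2)"
proof -
  define L where "L = length xs"
  have ne: "xs \<noteq> []" using path unfolding is_walk_def by simp
  have "{last xs, z} \<in> edges_on V" using z E by blast
  then have zV: "z \<in> V" "z \<noteq> last xs" unfolding doubleton_in_edges_on_iff by auto
  have "z \<in> set xs"
  proof (rule ccontr)
    assume "z \<notin> set xs"
    then have "length (xs @ [z]) \<le> length xs"
      using path zV is_walk_snoc[OF path(2) z] by (intro longest) auto
    then show False by simp
  qed
  then obtain j where j: "j < L" "xs ! j = z" unfolding L_def by (auto simp: in_set_conv_nth)
  have "j \<noteq> L - 1" using j zV ne unfolding L_def by (auto simp: last_conv_nth)
  moreover have "\<not> j + 3 \<le> L"
  proof
    assume j3: "j + 3 \<le> L"
    have "is_cycle E (drop j xs)" unfolding is_cycle_def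
      using j j3 path is_walk_drop[OF path(2), of j] z ne unfolding L_def by (auto simp: hd_drop_conv_nth)
    then show False using acyclic by blast
  qed
  ultimately have "j = L - 2" using j(1) by linarith
  then show ?thesis using j unfolding L_def by simp
qed

lemma acyclic_ex_deg_le_1:
  assumes "finite V" "V \<noteq> {}" "E \<subseteq> edges_on V" "\<not> (\<exists>xs. is_cycle E xs)"
  shows "\<exists>y\<in>V. deg E y \<le> 1"
proof -
  define is_path where "is_path xs \<longleftrightarrow> distinct xs \<and> is_walk E xs \<and> set xs \<subseteq> V" for xs
  obtain v0 where v0: "v0 \<in> V" using assms by blast
  have "is_path [v0]" using v0 by (simp add: is_path_def is_walk_def)
  moreover have "length xs < card V + 1" if "is_path xs" for xs
    using that card_mono[OF assms(1), of "set xs"] distinct_card[of xs] unfolding is_path_def by simp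
  ultimately obtain xs where "is_path xs" and longest: "\<And>ys. is_path ys \<Longrightarrow> length ys \<le> length xs"
    using ex_has_greatest_nat[of is_path "[v0]" length "card V + 1"] by blast
  then have path: "distinct xs" "is_walk E xs" "set xs \<subseteq> V" unfolding is_path_def by auto
  have "{e \<in> E. last xs \<in> e} \<subseteq> {{last xs, xs ! (length xs - 2)}}"
  proof
    fix e assume e: "e \<in> {e \<in> E. last xs \<in> e}"
    then have "e \<in> edges_on V" "last xs \<in> e" using assms(3) by auto
    then obtain z where z: "e = {last xs, z}" by (rule edges_on_other_end)
    have "z = xs ! (length xs - 2)"
      using longest_path_end_neighbour[OF path _ assms(4,3)] longest e z unfolding is_path_def by auto
    then show "e \<in> {{last xs, xs ! (length xs - 2)}}" using z by simp
  qed
  then have "deg E (last xs) \<le> card {{last xs, xs ! (length xs - 2)}}"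
    unfolding deg_def by (intro card_mono) auto
  then have "deg E (last xs) \<le> 1" by simp
  moreover have "last xs \<in> V" using path unfolding is_walk_def by auto
  ultimately show ?thesis by blast
qed

lemma acyclic_card_edges_less:
  "finite V \<Longrightarrow> V \<noteq> {} \<Longrightarrow> E \<subseteq> edges_on V \<Longrightarrow> \<not> (\<exists>xs. is_cycle E xs) \<Longrightarrow> card E < card V"
proof (induction "card V" arbitrary: V E rule: less_induct)
  case less
  obtain y where y: "y \<in> V" "deg E y \<le> 1" using acyclic_ex_deg_le_1 less.prems by blast
  define V' where "V' = V - {y}"
  define E' where "E' = {e \<in> E. y \<notin> e}"
  show ?case
  proof (cases "V' = {}")
    case True
    then have "V = {y}" using y(1) unfolding V'_def by blast
    then have "E = {}" using less.prems(3) unfolding edges_on_def by blast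
    then show ?thesis using \<open>V = {y}\<close> by simp
  next
    case False
    have "E = E' \<union> {e \<in> E. y \<in> e}" unfolding E'_def by blast
    then have card_E: "card E \<le> card E' + deg E y" unfolding deg_def by (metis card_Un_le)
    have card_V: "card V = card V' + 1"
      using card_Suc_Diff1[OF less.prems(1) y(1)] unfolding V'_def by simp
    have "card E' < card V'"
    proof (rule less.hyps)
      show "card V' < card V" "finite V'" "V' \<noteq> {}"
        using card_V less.prems(1) False unfolding V'_def by simp_all
      show "E' \<subseteq> edges_on V'"
        using less.prems(3) unfolding E'_def V'_def edges_on_def by blast
      show "\<not> (\<exists>xs. is_cycle E' xs)"
        using less.prems(4) is_cycle_mono[of E' _ E] unfolding E'_def by blast
    qed
    then show ?thesis using y(2) card_E card_V by linarith
  qed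
qed

lemma tree_sum_deg_minus_1_le:
  assumes "is_tree V E"
  shows "(\<Sum>y\<in>V. int (deg E y) - 1) \<le> int (card V) - 2"
proof -
  have V: "finite V" "V \<noteq> {}" and E: "E \<subseteq> edges_on V" "\<not> (\<exists>xs. is_cycle E xs)"
    using assms unfolding is_tree_iff by auto
  have "(\<Sum>y\<in>V. int (deg E y) - 1) = 2 * int (card E) - int (card V)"
    using sum_deg_eq_twice_card_edges[OF V(1) E(1)] by (simp add: sum_subtractf flip: of_nat_sum)
  then show ?thesis using acyclic_card_edges_less[OF V E] by linarith
qed

lemma tree_deg_ge_1:
  assumes "is_tree V E" "E \<noteq> {}" "w \<in> V"
  shows "1 \<le> deg E w"
proof -
  have E: "E \<subseteq> edges_on V" "finite E" and conn: "graph_connected V E"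
    using assms(1) finite_edges unfolding is_tree_iff by auto
  obtain a b where "a \<in> V" "b \<in> V" "a \<noteq> b" using assms(2) E(1) by (blast elim: edges_onE)
  then obtain p where "p \<in> V" "p \<noteq> w" by metis
  then show ?thesis using connected_deg_ge_1[OF conn E(2) assms(3)] by blast
qed

lemma tree_ex_leaf:
  assumes "is_tree V E" "E \<noteq> {}"
  obtains l where "l \<in> V" "deg E l = 1"
proof -
  obtain l where "l \<in> V" "deg E l \<le> 1"
    using acyclic_ex_deg_le_1 assms(1) unfolding is_tree_iff by blast
  then show ?thesis using tree_deg_ge_1[OF assms] that by fastforce
qed

section \<open>Attaching leaves\<close>

lemma graph_connected_add_leaf:
  assumes conn: "graph_connected V E" and a: "a \<in> V"
  shows "graph_connected (insert w V) (insert {a, w} E)"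
  unfolding graph_connected_def
proof (intro ballI)
  let ?E = "insert {a, w} E"
  fix p q assume p: "p \<in> insert w V" and q: "q \<in> insert w V"
  define p' where "p' = (if p = w then a else p)"
  define q' where "q' = (if q = w then a else q)"
  have "p' \<in> V" "q' \<in> V" using p q a unfolding p'_def q'_def by auto
  then obtain xs where xs: "is_walk E xs" "set xs \<subseteq> V" "hd xs = p'" "last xs = q'"
    using conn unfolding graph_connected_def by blast
  define ys where "ys = (if p = w then w # xs else xs)"
  have ys: "is_walk ?E ys" "set ys \<subseteq> insert w V" "hd ys = p" "last ys = q'"
    using xs is_walk_mono[OF xs(1), of ?E] is_walk_Cons[of ?E xs w]
    unfolding ys_def p'_def is_walk_def by (auto simp: insert_commute)
  define zs where "zs = (if q = w then ys @ [w] else ys)"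
  have "is_walk ?E zs" "set zs \<subseteq> insert w V" "hd zs = p" "last zs = q"
    using ys is_walk_snoc[of ?E ys w] unfolding zs_def q'_def is_walk_def by auto
  then show "\<exists>zs. is_walk ?E zs \<and> set zs \<subseteq> insert w V \<and> hd zs = p \<and> last zs = q" by blast
qed

lemma is_cycle_insert_edge_avoiding:
  assumes "is_cycle (insert e E) xs" "w \<in> e" "w \<notin> set xs"
  shows "is_cycle E xs"
proof -
  have avoid: "{y, z} \<noteq> e" if "y \<in> set xs" "z \<in> set xs" for y z
    using that assms(2,3) by auto
  have "xs \<noteq> []" using assms(1) unfolding is_cycle_def by auto
  then have "{last xs, hd xs} \<noteq> e" using avoid by simp
  moreover have "{xs ! i, xs ! Suc i} \<noteq> e" if "Suc i < length xs" for i
    using that avoid by simp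
  ultimately show ?thesis using assms(1) unfolding is_cycle_def is_walk_def by auto
qed

lemma acyclic_add_leaf:
  assumes E: "E \<subseteq> edges_on V" and acyclic: "\<not> (\<exists>xs. is_cycle E xs)" and w: "w \<notin> V"
  shows "\<not> (\<exists>xs. is_cycle (insert {a, w} E) xs)"
proof
  assume "\<exists>xs. is_cycle (insert {a, w} E) xs"
  then obtain xs where cyc: "is_cycle (insert {a, w} E) xs" by blast
  show False
  proof (cases "w \<in> set xs")
    case True
    have no_edge: "{w, y} \<notin> E" for y using E w edges_on_subset_Pow by blast
    obtain y z where "y \<noteq> z" "y \<noteq> w" "z \<noteq> w"
      "{w, y} \<in> insert {a, w} E" "{w, z} \<in> insert {a, w} E"
      using is_cycle_two_neighbours[OF cyc True] by metis
    then show False using no_edge by (auto simp: doubleton_eq_iff)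
  next
    case False
    then show False using is_cycle_insert_edge_avoiding[OF cyc _ False] acyclic by blast
  qed
qed

lemma is_tree_add_leaf:
  assumes T: "is_tree V E" and a: "a \<in> V" and w: "w \<notin> V"
  shows "is_tree (insert w V) (insert {a, w} E)"
proof -
  have V: "finite V" and E: "E \<subseteq> edges_on V" and conn: "graph_connected V E"
    and acyclic: "\<not> (\<exists>xs. is_cycle E xs)" using T unfolding is_tree_iff by auto
  have "insert {a, w} E \<subseteq> edges_on (insert w V)"
    using E a w unfolding edges_on_def by blast
  then show ?thesis unfolding is_tree_iff
    using V graph_connected_add_leaf[OF conn a] acyclic_add_leaf[OF E acyclic w] by blast
qed

lemma deg_add_leaf:
  assumes "finite V" "E \<subseteq> edges_on V" "a \<in> V" "w \<notin> V"
  shows "deg (insert {a, w} E) y =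
    (if y = w then 1 else if y = a then deg E a + 1 else deg E y)"
proof -
  have fin: "finite {e \<in> E. y \<in> e}" using finite_edges[OF assms(1,2)] by simp
  have avoid: "w \<notin> e" if "e \<in> E" for e using assms(2,4) that edges_on_subset_Pow by blast
  have aw: "a \<noteq> w" using assms(3,4) by blast
  consider "y = w" | "y = a" | "y \<noteq> w" "y \<noteq> a" by blast
  then show ?thesis
  proof cases
    case 1
    then have "{e \<in> insert {a, w} E. y \<in> e} = {{a, w}}" using avoid by auto
    then show ?thesis unfolding deg_def using 1 by simp
  next
    case 2
    then have "{e \<in> insert {a, w} E. y \<in> e} = insert {a, w} {e \<in> E. y \<in> e}" by auto
    moreover have "{a, w} \<notin> E" using avoid by blast
    ultimately show ?thesis unfolding deg_def using 2 aw fin by simp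
  next
    case 3
    then have "{e \<in> insert {a, w} E. y \<in> e} = {e \<in> E. y \<in> e}" by auto
    then show ?thesis unfolding deg_def using 3 by simp
  qed
qed

lemma ex_tree_attach_leaves:
  fixes V :: "'a set"
  assumes inf: "infinite (UNIV :: 'a set)" and T: "is_tree V E" and a: "a \<in> V"
  shows "\<exists>N E'. N \<inter> V = {} \<and> card N = k \<and> is_tree (V \<union> N) E' \<and> E \<subseteq> E' \<and>
    deg E' a = deg E a + k \<and> (\<forall>w\<in>N. deg E' w = 1) \<and> (\<forall>y\<in>V - {a}. deg E' y = deg E y)"
proof (induction k)
  case 0
  show ?case using T by (intro exI[of _ "{}"] exI[of _ E]) auto
next
  case (Suc k)
  then obtain N E' where N: "N \<inter> V = {}" "card N = k" "is_tree (V \<union> N) E'" "E \<subseteq> E'"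
    "deg E' a = deg E a + k" "\<forall>w\<in>N. deg E' w = 1" "\<forall>y\<in>V - {a}. deg E' y = deg E y"
    by blast
  have fin: "finite (V \<union> N)" and E': "E' \<subseteq> edges_on (V \<union> N)" using N(3) unfolding is_tree_iff by auto
  obtain w where w: "w \<notin> V \<union> N" using ex_new_if_finite[OF inf fin] by blast
  have aVN: "a \<in> V \<union> N" using a by simp
  note deg_new = deg_add_leaf[OF fin E' aVN w]
  show ?case
  proof (intro exI[of _ "insert w N"] exI[of _ "insert {a, w} E'"] conjI ballI)
    show "insert w N \<inter> V = {}" "E \<subseteq> insert {a, w} E'" using N(1,4) w by auto
    show "card (insert w N) = Suc k" using N(2) w fin by simp
    show "is_tree (V \<union> insert w N) (insert {a, w} E')"
      using is_tree_add_leaf[OF N(3) aVN w] by simp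
    show "deg (insert {a, w} E') a = deg E a + Suc k" using deg_new[of a] N(5) w a by auto
    show "deg (insert {a, w} E') y = 1" if "y \<in> insert w N" for y
      using that deg_new[of y] N(1,6) a by auto
    show "deg (insert {a, w} E') y = deg E y" if "y \<in> V - {a}" for y
      using that deg_new[of y] N(7) w by auto
  qed
qed

section \<open>An upper bound for sigma\<close>

lemma is_tree_singleton: "is_tree {v} {}"
  unfolding is_tree_iff graph_connected_def is_cycle_def
  by (auto simp: is_walk_def intro!: exI[of _ "[v]"])

lemma is_tree_path4: "is_tree {0::nat, 1, 2, 3} {{0, 1}, {1, 2}, {2, 3}}"
proof -
  have "is_tree (insert 1 {0::nat}) (insert {0, 1} {})"
    by (rule is_tree_add_leaf[OF is_tree_singleton]) auto
  then have "is_tree (insert 2 (insert 1 {0::nat})) (insert {1, 2} (insert {0, 1} {}))"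
    by (rule is_tree_add_leaf) auto
  then have "is_tree (insert 3 (insert 2 (insert 1 {0::nat})))
      (insert {2, 3} (insert {1, 2} (insert {0, 1} {})))"
    by (rule is_tree_add_leaf) auto
  then show ?thesis by (simp add: insert_commute)
qed

lemma deg_path4:
  defines "E \<equiv> {{0::nat, 1}, {1, 2}, {2, 3}}"
  shows "deg E 0 = 1" "deg E 1 = 2" "deg E 2 = 2" "deg E 3 = 1"
proof -
  have "{e \<in> E. 0 \<in> e} = {{0, 1}}" "{e \<in> E. 1 \<in> e} = {{0, 1}, {1, 2}}"
    "{e \<in> E. 2 \<in> e} = {{1, 2}, {2, 3}}" "{e \<in> E. 3 \<in> e} = {{2, 3}}"
    unfolding E_def by auto
  then show "deg E 0 = 1" "deg E 1 = 2" "deg E 2 = 2" "deg E 3 = 1"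
    unfolding deg_def by (auto simp: doubleton_eq_iff)
qed

lemma ex_tree_grow_leaf_star:
  fixes V :: "nat set"
  assumes T: "is_tree V E" "{1, 2} \<in> E" "deg E 1 = 2" "deg E 2 = 2"
    and degs: "(\<lambda>w. int (deg E w)) ` (V - {1, 2}) = insert 1 X" and d: "d > 1"
  shows "\<exists>(V'::nat set) E'. is_tree V' E' \<and> {1, 2} \<in> E' \<and> deg E' 1 = 2 \<and> deg E' 2 = 2 \<and>
    (\<lambda>w. int (deg E' w)) ` (V' - {1, 2}) = insert 1 (insert d X) \<and>
    int (card V') = int (card V) + d - 1"
proof -
  obtain l where l: "l \<in> V" "deg E l = 1" using tree_ex_leaf[OF T(1)] T(2) by blast
  define k where "k = nat (d - 1)"
  have k: "int k = d - 1" "k \<noteq> 0" using d unfolding k_def by auto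
  obtain N E' where N: "N \<inter> V = {}" "card N = k" "is_tree (V \<union> N) E'" "E \<subseteq> E'"
    "deg E' l = deg E l + k" "\<forall>w\<in>N. deg E' w = 1" "\<forall>y\<in>V - {l}. deg E' y = deg E y"
    using ex_tree_attach_leaves[OF infinite_UNIV_nat T(1) l(1), of k] by blast
  have "N \<noteq> {}" using N(2) k(2) by auto
  have "1 \<in> V" "2 \<in> V" using T(1,2) unfolding is_tree_iff by (auto simp: doubleton_in_edges_on_iff)
  moreover have "l \<noteq> 1" "l \<noteq> 2" using l(2) T(3,4) by auto
  ultimately have V_N: "(V \<union> N) - {1, 2} = (V - {1, 2} - {l}) \<union> {l} \<union> N" using l(1) N(1) by auto
  let ?f = "\<lambda>w. int (deg E w)" and ?g = "\<lambda>w. int (deg E' w)"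
  have "?g ` (V - {1, 2} - {l}) = ?f ` (V - {1, 2} - {l})" using N(7) by auto
  moreover have "insert 1 (?f ` (V - {1, 2} - {l})) = ?f ` insert l (V - {1, 2} - {l})"
    by (simp only: image_insert l(2) of_nat_1)
  also have "\<dots> = insert 1 X" using degs l(1) \<open>l \<noteq> 1\<close> \<open>l \<noteq> 2\<close> by (simp add: insert_absorb)
  moreover have "?g ` N = {1}" "?g l = d" using N(5,6) \<open>N \<noteq> {}\<close> l(2) k(1) by auto
  ultimately have "?g ` ((V \<union> N) - {1, 2}) = insert 1 (insert d X)"
    unfolding V_N image_Un by auto
  moreover have "card (V \<union> N) = card V + k"
    using N(1-3) card_Un_disjoint[of V N] unfolding is_tree_iff by (auto simp: Int_commute)
  moreover have "{1, 2} \<in> E'" "deg E' 1 = 2" "deg E' 2 = 2"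
    using N(4,7) T(2-4) \<open>1 \<in> V\<close> \<open>2 \<in> V\<close> \<open>l \<noteq> 1\<close> \<open>l \<noteq> 2\<close> by auto
  ultimately show ?thesis using N(3) k(1) by (intro exI[of _ "V \<union> N"] exI[of _ E']) simp
qed

lemma ex_tree_with_degree_set:
  fixes X :: "int set"
  assumes "finite X" "\<forall>d\<in>X. d > 1"
  shows "\<exists>(V::nat set) E. is_tree V E \<and> {1, 2} \<in> E \<and> deg E 1 = 2 \<and> deg E 2 = 2 \<and>
    (\<lambda>w. int (deg E w)) ` (V - {1, 2}) = insert 1 X \<and> int (card V) = 4 + (\<Sum>d\<in>X. d - 1)"
  using assms
proof (induction X rule: finite_induct)
  case empty
  have "{0::nat, 1, 2, 3} - {1, 2} = {0, 3}" by auto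
  then show ?case using is_tree_path4 deg_path4
    by (intro exI[of _ "{0::nat, 1, 2, 3}"] exI[of _ "{{0, 1}, {1, 2}, {2, 3}}"]) simp
next
  case (insert d X)
  then obtain V :: "nat set" and E where
    T: "is_tree V E" "{1, 2} \<in> E" "deg E 1 = 2" "deg E 2 = 2"
    and degs: "(\<lambda>w. int (deg E w)) ` (V - {1, 2}) = insert 1 X"
    and card_V: "int (card V) = 4 + (\<Sum>d\<in>X. d - 1)"
    by auto
  obtain V' :: "nat set" and E' where "is_tree V' E'" "{1, 2} \<in> E'" "deg E' 1 = 2" "deg E' 2 = 2"
    "(\<lambda>w. int (deg E' w)) ` (V' - {1, 2}) = insert 1 (insert d X)"
    and card_V': "int (card V') = int (card V) + d - 1"
    using ex_tree_grow_leaf_star[OF T degs, of d] insert.prems by auto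
  moreover have "int (card V') = 4 + (\<Sum>d\<in>insert d X. d - 1)"
    using insert.hyps card_V card_V' by simp
  ultimately show ?case by blast
qed

lemma sdeg_single_negative_edge:
  assumes "finite E" "{e \<in> E. \<not> s e} = {{a, b}}"
  shows "sdeg E s w = int (deg E w) - (if w = a \<or> w = b then 2 else 0)"
proof -
  have "{e \<in> E. w \<in> e \<and> \<not> s e} = {e \<in> {e \<in> E. \<not> s e}. w \<in> e}" by auto
  also have "\<dots> = (if w = a \<or> w = b then {{a, b}} else {})" unfolding assms(2) by auto
  finally have neg: "{e \<in> E. w \<in> e \<and> \<not> s e} = (if w = a \<or> w = b then {{a, b}} else {})" .
  have split: "{e \<in> E. w \<in> e} = {e \<in> E. w \<in> e \<and> s e} \<union> {e \<in> E. w \<in> e \<and> \<not> s e}" by auto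
  have "deg E w = card {e \<in> E. w \<in> e \<and> s e} + card {e \<in> E. w \<in> e \<and> \<not> s e}"
    unfolding deg_def split using assms(1) by (intro card_Un_disjoint) auto
  then show ?thesis unfolding sdeg_def using neg by (auto split: if_splits)
qed

lemma sigma_le:
  assumes "finite X" "\<forall>d\<in>X. d > 1"
  shows "int (sigma ({1, 0} \<union> X)) \<le> 4 + (\<Sum>d\<in>X. d - 1)"
proof -
  obtain V :: "nat set" and E where T: "is_tree V E" "{1, 2} \<in> E" "deg E 1 = 2" "deg E 2 = 2"
    and degs: "(\<lambda>w. int (deg E w)) ` (V - {1, 2}) = insert 1 X"
    and card_V: "int (card V) = 4 + (\<Sum>d\<in>X. d - 1)"
    using ex_tree_with_degree_set[OF assms] by blast
  define s :: "nat set \<Rightarrow> bool" where "s e \<longleftrightarrow> e \<noteq> {1, 2}" for e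
  have "finite E" using T(1) finite_edges unfolding is_tree_iff by blast
  moreover have "{e \<in> E. \<not> s e} = {{1, 2}}" using T(2) unfolding s_def by auto
  ultimately have sdeg: "sdeg E s w = int (deg E w) - (if w = 1 \<or> w = 2 then 2 else 0)" for w
    by (rule sdeg_single_negative_edge)
  have "{1, 2} \<in> edges_on V" using T(1,2) unfolding is_tree_iff by blast
  then have "V = {1, 2} \<union> (V - {1, 2})" unfolding doubleton_in_edges_on_iff by blast
  then have "sdeg E s ` V = sdeg E s ` {1, 2} \<union> sdeg E s ` (V - {1, 2})"
    by (metis image_Un)
  also have "sdeg E s ` {1, 2} = {0}" using sdeg T(3,4) by simp
  also have "sdeg E s ` (V - {1, 2}) = (\<lambda>w. int (deg E w)) ` (V - {1, 2})"
    using sdeg by (intro image_cong) auto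
  finally have realizes: "realizes V E s ({1, 0} \<union> X)" unfolding realizes_def degs by auto
  have "sigma ({1, 0} \<union> X) \<le> card V"
    unfolding sigma_def by (rule Least_le) (use T(1) realizes in blast)
  then show ?thesis using card_V by linarith
qed

section \<open>The lower bound\<close>

lemma tree_sum_degrees_outside_edge_le:
  assumes T: "is_tree V E" and pq: "{p, q} \<in> E"
    and Y: "Y \<subseteq> (\<lambda>y. int (deg E y)) ` (V - {p, q})"
  shows "(\<Sum>d\<in>Y. d - 1) + (int (deg E p) - 1) + (int (deg E q) - 1) \<le> int (card V) - 2"
proof -
  let ?W = "V - {p, q}" and ?deg = "\<lambda>y. int (deg E y)"
  have fin: "finite V" using T unfolding is_tree_iff by blast
  have "{p, q} \<in> edges_on V" using T pq unfolding is_tree_iff by blast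
  then have pq_V: "p \<in> V" "q \<in> V" "p \<noteq> q" unfolding doubleton_in_edges_on_iff by auto
  have deg_ge_1: "1 \<le> deg E w" if "w \<in> V" for w
    using tree_deg_ge_1[OF T _ that] pq by blast
  have "(\<Sum>d\<in>Y. d - 1) \<le> (\<Sum>d\<in>?deg ` ?W. d - 1)"
    using Y fin by (intro sum_mono2) (auto dest: deg_ge_1)
  also have "\<dots> \<le> (\<Sum>y\<in>?W. ?deg y - 1)"
    by (rule sum_image_le[of ?W "\<lambda>d. d - 1" ?deg, unfolded o_def])
      (use fin deg_ge_1 in \<open>auto simp: Suc_le_eq\<close>)
  also have "\<dots> = (\<Sum>y\<in>V. ?deg y - 1) - (?deg p - 1) - (?deg q - 1)"
  proof -
    have "(\<Sum>y\<in>V. ?deg y - 1) = (?deg p - 1) + (\<Sum>y\<in>V - {p}. ?deg y - 1)"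
      using fin pq_V(1) by (rule sum.remove)
    also have "(\<Sum>y\<in>V - {p}. ?deg y - 1) = (?deg q - 1) + (\<Sum>y\<in>V - {p} - {q}. ?deg y - 1)"
      using fin pq_V by (intro sum.remove) auto
    also have "V - {p} - {q} = ?W" by blast
    finally show ?thesis by simp
  qed
  finally show ?thesis using tree_sum_deg_minus_1_le[OF T] by linarith
qed

lemma card_lower_bound_if_other_end_deg_ne_2:
  assumes T: "is_tree V E" and "realizes V E s ({1, 0} \<union> X)"
    and X: "finite X" "\<forall>d\<in>X. d > 1"
    and neg: "{e \<in> E. \<not> s e} = {{p, q}}" and p: "deg E p = 2" and q: "deg E q \<noteq> 2"
  shows "5 + (\<Sum>d\<in>X. d - 1) \<le> int (card V)"
proof -
  have R: "sdeg E s ` V = {1, 0} \<union> X" using assms(2) unfolding realizes_def by simp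
  have pq: "{p, q} \<in> E" using neg by blast
  then have q_V: "q \<in> V" using T unfolding is_tree_iff by (auto simp: doubleton_in_edges_on_iff)
  have sdeg: "sdeg E s w = int (deg E w) - (if w = p \<or> w = q then 2 else 0)" for w
    using sdeg_single_negative_edge[OF _ neg] T finite_edges unfolding is_tree_iff by blast
  define c where "c = int (deg E q) - 2"
  have c_sdeg: "c = sdeg E s q" unfolding c_def sdeg by simp
  have "c \<in> sdeg E s ` V" unfolding c_sdeg using q_V by (rule imageI)
  then have "c \<in> {1, 0} \<union> X" unfolding R .
  moreover have "c \<noteq> 0" "-1 \<le> c" using q tree_deg_ge_1[OF T _ q_V] pq unfolding c_def by auto
  ultimately have c: "1 \<le> c" using X(2) by (cases "c \<in> X") auto
  have "X - {c} \<subseteq> (\<lambda>y. int (deg E y)) ` (V - {p, q})"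
  proof
    fix d assume d: "d \<in> X - {c}"
    then have "d \<in> sdeg E s ` V" unfolding R by blast
    then obtain y where y: "y \<in> V" "sdeg E s y = d" by blast
    have "y \<noteq> p" using y d X(2) sdeg[of p] p by force
    moreover have "y \<noteq> q" using y d c_sdeg by blast
    ultimately show "d \<in> (\<lambda>y. int (deg E y)) ` (V - {p, q})" using y sdeg[of y] by force
  qed
  from tree_sum_degrees_outside_edge_le[OF T pq this]
  have "(\<Sum>d\<in>X - {c}. d - 1) \<le> int (card V) - 4 - c" using p unfolding c_def by simp
  moreover have "(\<Sum>d\<in>X. d - 1) \<le> (\<Sum>d\<in>X - {c}. d - 1) + (c - 1)"
    using X(1) c by (simp add: sum_diff1)
  ultimately show ?thesis by linarith
qed

lemma optimal_other_end_deg_2: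
  assumes "optimal V E s ({1, 0} \<union> X)" "finite X" "\<forall>d\<in>X. d > 1"
    and "{e \<in> E. \<not> s e} = {{p, q}}" "deg E p = 2"
  shows "deg E q = 2"
  using assms card_lower_bound_if_other_end_deg_ne_2[of V E s X p q] sigma_le[of X]
  unfolding optimal_def by force

theorem mainTheorem11:
  fixes n :: nat and x :: "nat \<Rightarrow> int" and D :: "int set"
    and V :: "'a set" and E :: "'a set set" and s :: "'a set \<Rightarrow> bool" and u v :: 'a
  assumes "n \<ge> 1"
    and "inj_on x {1..n}"
    and "\<forall>i\<in>{1..n}. x i > 1"
    and "D = {1, 0} \<union> x ` {1..n}"
    and "optimal V E s D"
    and "{e \<in> E. \<not> s e} = {{u, v}}"
  shows "deg E u = 2 \<and> deg E v = 2"
proof -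
  define X where "X = x ` {1..n}"
  have X: "finite X" "\<forall>d\<in>X. d > 1" using assms(3) unfolding X_def by auto
  have opt: "optimal V E s ({1, 0} \<union> X)" using assms(4,5) unfolding X_def by simp
  then have T: "is_tree V E" and R: "sdeg E s ` V = {1, 0} \<union> X"
    unfolding optimal_def realizes_def by auto
  have fin: "finite E" using T finite_edges unfolding is_tree_iff by blast
  obtain w where w: "w \<in> V" "sdeg E s w = 0" using R by (metis UnI1 imageE insertCI)
  have "1 \<le> deg E w" using tree_deg_ge_1[OF T _ w(1)] assms(6) by blast
  then have "deg E u = 2 \<or> deg E v = 2"
    using w(2) sdeg_single_negative_edge[OF fin assms(6), of w] by (auto split: if_splits)
  then show ?thesis
    using optimal_other_end_deg_2[OF opt X] assms(6) by (metis insert_commute)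
qed

end
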